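(* Let $0\le s\le n$ and let $\mathbb{T}$ be a variational morphism of rank $r-1$ and degree $n-s$ on $W$, given for every $\pi$-vertical vector field $\Xi$ on $W$ by $$\langle\mathbb{T}|J^{r-1}\Xi\rangle=\Big(\sum_{|J|=0}^{r-1}t^{i_1\dots i_sJ}_\sigma\Xi^\sigma_J\Big)\wedge ds_{i_1\dots i_s},$$ with coefficients $t^{i_1\dots i_sJ}_\sigma$ (functions on some jet prolongation $W^t$) antisymmetric in $i_1\dots i_s$ and symmetric in the indices of $J$. Define the $(n-s)$-horizontal $1$-contact $(n-s+1)$-form $$\tilde{\mathcal{R}}=\Big(\sum_{|J|=0}^{r-1}-t^{i_1\dots i_sJ}_\sigma\,\omega^\sigma_J\Big)\wedge ds_{i_1\dots i_s}.$$ Then for every $\pi$-vertical vector field $\Xi$ on $W$, $$\mathrm{Div}\big(\langle\mathbb{T}|J^{r-1}\Xi\rangle\big)=J^r\Xi\lrcorner\,d_H\tilde{\mathcal{R}}.$$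
   Context: Let $\pi:Y\to X$ be a fibered manifold, $n=\dim X$, $m=\dim Y-n$. Let $U\subseteq X$ be open and $W=\pi^{-1}(U)$ the domain of a fibered chart $(x^i,y^\sigma)$ with associated jet coordinates $(x^i,y^\sigma_J)$ on $W^r\subseteq J^rY$, $J$ a multi-index of length $|J|\le r$ ($y^\sigma_J$ symmetric in $J$); sums over multi-indices run over all index tuples and repeated indices are summed. Contact forms: $\omega^\sigma_J=dy^\sigma_J-y^\sigma_{Ji}dx^i$. $ds=dx^1\wedge\dots\wedge dx^n$, $ds_{i_1\dots i_s}=\frac{\partial}{\partial x^{i_s}}\lrcorner\dots\lrcorner\frac{\partial}{\partial x^{i_1}}\lrcorner ds$. Formal derivative $d_i=\frac{\partial}{\partial x^i}+\sum_J y^\sigma_{Ji}\frac{\partial}{\partial y^\sigma_J}$ on functions; the total derivative of forms $\mathrm{d}_i$ equals $d_i$ on functions, obeys the Leibniz rule with respect to $\wedge$, and $\mathrm{d}_idx^j=0$, $\mathrm{d}_i\omega^\sigma_J=\omega^\sigma_{Ji}$. The horizontal differential of a $q$-form is $d_H\rho=(-1)^q\mathrm{d}_i\rho\wedge dx^i$. A form is $p$-horizontal if each term contains exactly $p$ factors $dx^i$, and $1$-contact if each term contains exactly one factor $\omega^\sigma_J$. For a $\pi$-vertical vector field $\Xi=\Xi^\sigma\partial/\partial y^\sigma$, $J^r\Xi=\sum_{|J|\le r}\Xi^\sigma_J\partial/\partial y^\sigma_J$ with $\Xi^\sigma_J=d_J\Xi^\sigma$. For a horizontal form $\beta=f^{i_1\dots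 i_p}ds_{i_1\dots i_p}$ with coefficients depending on $x$, jets of $y$ and jets of $\Xi$, $\mathrm{Div}(\beta)=d_lf^{i_1\dots i_p}\,dx^l\wedge ds_{i_1\dots i_p}$, where $d_l$ acts as formal derivative also on the $\Xi$-variables ($d_l\Xi^\sigma_J=\Xi^\sigma_{Jl}$). *)

theory Defs
  imports "HOL-Analysis.Analysis" "HOL-Library.Multiset" "HOL-Combinatorics.Permutations"
begin

text \<open>Jet coordinates: x^i (index type 'n, n = CARD('n)) and y^sigma_J
  (sigma :: 'm, m = CARD('m); J a multi-index, represented as a multiset since
  y^sigma_J is symmetric in J).\<close>
datatype ('n, 'm) coord = X 'n | Y 'm "'n multiset"

type_synonym ('n, 'm) pt = "('n, 'm) coord \<Rightarrow> real"

fun cord :: "('n, 'm) coord \<Rightarrow> nat" where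
  "cord (X i) = 0"
| "cord (Y s J) = size J"

definition Dom :: "(('n \<Rightarrow> real) \<times> ('m \<Rightarrow> real)) set \<Rightarrow> ('n, 'm) pt set" where
  "Dom W = {p. ((\<lambda>i. p (X i)), (\<lambda>s. p (Y s {#}))) \<in> W}"

definition pd :: "'c \<Rightarrow> (('c \<Rightarrow> real) \<Rightarrow> real) \<Rightarrow> ('c \<Rightarrow> real) \<Rightarrow> real" where
  "pd c f p = deriv (\<lambda>h. f (p(c := p c + h))) 0"

fun pds :: "'c list \<Rightarrow> (('c \<Rightarrow> real) \<Rightarrow> real) \<Rightarrow> ('c \<Rightarrow> real) \<Rightarrow> real" where
  "pds [] f = f"
| "pds (c # cs) f = pd c (pds cs f)"

definition smooth_on :: "('c \<Rightarrow> real) set \<Rightarrow> (('c \<Rightarrow> real) \<Rightarrow> real) \<Rightarrow> bool" where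
  "smooth_on D f \<longleftrightarrow> (\<forall>cs. (\<forall>p\<in>D. \<forall>c. (\<lambda>h. pds cs f (p(c := p c + h))) differentiable (at 0))
                         \<and> continuous_on D (pds cs f))"

text \<open>f is a function on W^k: it depends only on the coordinates x^i, y^sigma_J with |J| <= k.\<close>
definition depends_upto :: "nat \<Rightarrow> (('n, 'm) pt \<Rightarrow> real) \<Rightarrow> bool" where
  "depends_upto k f \<longleftrightarrow> (\<forall>p q. (\<forall>c. cord c \<le> k \<longrightarrow> p c = q c) \<longrightarrow> f p = f q)"

definition ford :: "(('n, 'm) pt \<Rightarrow> real) \<Rightarrow> nat" where
  "ford f = (LEAST k. depends_upto k f)"

definition fd :: "'n::finite \<Rightarrow> (('n, 'm::finite) pt \<Rightarrow> real) \<Rightarrow> ('n, 'm) pt \<Rightarrow> real" where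
  "fd i f p = pd (X i) f p
     + (\<Sum>s\<in>UNIV. \<Sum>J\<in>{J::'n multiset. size J \<le> ford f}. p (Y s (J + {#i#})) * pd (Y s J) f p)"

datatype ('n, 'm) b1 = DX 'n | OM 'm "'n multiset"

text \<open>A form is a finite formal sum of monomials  c * b_1 /\ ... /\ b_k .\<close>
type_synonym ('n, 'm) form = "((('n, 'm) pt \<Rightarrow> real) \<times> ('n, 'm) b1 list) list"

text \<open>Value of a basic 1-form on a tangent vector v at p;
  omega^sigma_J = dy^sigma_J - y^sigma_{Ji} dx^i.\<close>
fun ev1 :: "('n::finite, 'm) pt \<Rightarrow> ('n, 'm) b1 \<Rightarrow> ('n, 'm) pt \<Rightarrow> real" where
  "ev1 p (DX i) v = v (X i)"
| "ev1 p (OM s J) v = v (Y s J) - (\<Sum>i\<in>UNIV. p (Y s (J + {#i#})) * v (X i))"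

definition mono_eval :: "('n::finite, 'm) pt \<Rightarrow> (('n, 'm) pt \<Rightarrow> real) \<Rightarrow> ('n, 'm) b1 list
     \<Rightarrow> ('n, 'm) pt list \<Rightarrow> real" where
  "mono_eval p c bs vs = (if length vs = length bs then
      c p * (\<Sum>\<pi> | \<pi> permutes {..<length bs}.
               of_int (sign \<pi>) * (\<Prod>a<length bs. ev1 p (bs ! a) (vs ! (\<pi> a))))
    else 0)"

definition form_eval :: "('n::finite, 'm) pt \<Rightarrow> ('n, 'm) form \<Rightarrow> ('n, 'm) pt list \<Rightarrow> real" where
  "form_eval p A vs = sum_list (map (\<lambda>(c, bs). mono_eval p c bs vs) A)"

definition form_eq :: "('n::finite, 'm) pt set \<Rightarrow> ('n, 'm) form \<Rightarrow> ('n, 'm) form \<Rightarrow> bool" where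
  "form_eq D A B \<longleftrightarrow> (\<forall>p\<in>D. \<forall>vs. form_eval p A vs = form_eval p B vs)"

definition wedge :: "('n, 'm) form \<Rightarrow> ('n, 'm) form \<Rightarrow> ('n, 'm) form" where
  "wedge A B = concat (map (\<lambda>(c, bs). map (\<lambda>(d, es). ((\<lambda>p. c p * d p), bs @ es)) B) A)"

definition fsum :: "'a set \<Rightarrow> ('a \<Rightarrow> ('n, 'm) form) \<Rightarrow> ('n, 'm) form" where
  "fsum A g = concat (map g (SOME xs. distinct xs \<and> set xs = A))"

definition contr :: "(('n::finite, 'm) pt \<Rightarrow> ('n, 'm) pt) \<Rightarrow> ('n, 'm) form \<Rightarrow> ('n, 'm) form" where
  "contr xi A = concat (map (\<lambda>(c, bs). map (\<lambda>a.
       ((\<lambda>p. (-1) ^ a * c p * ev1 p (bs ! a) (xi p)), take a bs @ drop (Suc a) bs))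
     [0..<length bs]) A)"

definition dxvec :: "'n \<Rightarrow> ('n, 'm) pt \<Rightarrow> ('n, 'm) pt" where
  "dxvec i p = (\<lambda>c. if c = X i then 1 else 0)"

definition ds :: "('n::{finite,linorder}, 'm) form" where
  "ds = [((\<lambda>_. 1), map DX (sorted_list_of_set (UNIV :: 'n set)))]"

definition dsI :: "'n::{finite,linorder} list \<Rightarrow> ('n, 'm) form" where
  "dsI I = fold (\<lambda>i \<rho>. contr (dxvec i) \<rho>) I ds"

text \<open>Total derivative of forms: Leibniz rule, d_i dx^j = 0, d_i omega^sigma_J = omega^sigma_{Ji}.\<close>
fun dshift :: "'n \<Rightarrow> ('n, 'm) b1 \<Rightarrow> ('n, 'm) b1 option" where
  "dshift i (DX j) = None"
| "dshift i (OM s J) = Some (OM s (J + {#i#}))"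

definition tot_d :: "'n::finite \<Rightarrow> ('n, 'm::finite) form \<Rightarrow> ('n, 'm) form" where
  "tot_d i A = concat (map (\<lambda>(c, bs). (fd i c, bs) #
      concat (map (\<lambda>a. case dshift i (bs ! a) of None \<Rightarrow> [] | Some b \<Rightarrow> [(c, bs[a := b])])
                  [0..<length bs])) A)"

definition dH :: "('n::finite, 'm::finite) form \<Rightarrow> ('n, 'm) form" where
  "dH A = concat (map (\<lambda>(c, bs).
      fsum UNIV (\<lambda>i. map (\<lambda>(c', bs'). ((\<lambda>p. (-1) ^ length bs * c' p), bs' @ [DX i]))
                           (tot_d i [(c, bs)]))) A)"

definition xijet :: "('m \<Rightarrow> ('n::{finite,linorder}, 'm::finite) pt \<Rightarrow> real) \<Rightarrow> 'm \<Rightarrow> 'n multiset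
     \<Rightarrow> ('n, 'm) pt \<Rightarrow> real" where
  "xijet Xi s J = fold fd (sorted_list_of_multiset J) (Xi s)"

definition jprol :: "nat \<Rightarrow> ('m \<Rightarrow> ('n::{finite,linorder}, 'm::finite) pt \<Rightarrow> real)
     \<Rightarrow> ('n, 'm) pt \<Rightarrow> ('n, 'm) pt" where
  "jprol r Xi p = (\<lambda>c. case c of X i \<Rightarrow> 0
                               | Y s J \<Rightarrow> (if size J \<le> r then xijet Xi s J p else 0))"

text \<open>Coefficients of forms depending on x, jets of y and formal jet variables
  xi(sigma, J) standing for Xi^sigma_J.\<close>
type_synonym ('n, 'm) xcoef = "('n, 'm) pt \<Rightarrow> ('m \<times> 'n multiset \<Rightarrow> real) \<Rightarrow> real"

definition dependsF :: "nat \<Rightarrow> ('n, 'm) xcoef \<Rightarrow> bool" where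
  "dependsF k F \<longleftrightarrow> (\<forall>p p' \<xi> \<xi>'. (\<forall>c. cord c \<le> k \<longrightarrow> p c = p' c)
       \<longrightarrow> (\<forall>s J. size J \<le> k \<longrightarrow> \<xi> (s, J) = \<xi>' (s, J)) \<longrightarrow> F p \<xi> = F p' \<xi>')"

definition fordF :: "('n, 'm) xcoef \<Rightarrow> nat" where
  "fordF F = (LEAST k. dependsF k F)"

text \<open>Formal derivative acting also on the Xi-variables (d_l Xi^sigma_J = Xi^sigma_{Jl}).\<close>
definition fdX :: "'n::finite \<Rightarrow> ('n, 'm::finite) xcoef \<Rightarrow> ('n, 'm) xcoef" where
  "fdX l F p \<xi> = pd (X l) (\<lambda>q. F q \<xi>) p
     + (\<Sum>s\<in>UNIV. \<Sum>J\<in>{J::'n multiset. size J \<le> fordF F}. p (Y s (J + {#l#})) * pd (Y s J) (\<lambda>q. F q \<xi>) p)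
     + (\<Sum>s\<in>UNIV. \<Sum>J\<in>{J::'n multiset. size J \<le> fordF F}. \<xi> (s, J + {#l#}) * pd (s, J) (F p) \<xi>)"

text \<open>For beta = f^{i_1...i_s} ds_{i_1...i_s} (sum over all index tuples I of length s),
  Div(beta) = d_l f^{I} dx^l /\ ds_I, evaluated along the jets of Xi.\<close>
definition Div :: "('m \<Rightarrow> ('n::{finite,linorder}, 'm::finite) pt \<Rightarrow> real) \<Rightarrow> nat
     \<Rightarrow> ('n list \<Rightarrow> ('n, 'm) xcoef) \<Rightarrow> ('n, 'm) form" where
  "Div Xi s f = fsum {I. length I = s} (\<lambda>I. fsum UNIV (\<lambda>l.
      wedge [((\<lambda>p. fdX l (f I) p (\<lambda>(\<sigma>, J). xijet Xi \<sigma> J p)), [DX l])] (dsI I)))"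

text \<open>Coefficients of <T | J^{r-1} Xi> = (sum_{|J|<=r-1} t^{I J}_sigma Xi^sigma_J) /\ ds_I,
  with Xi^sigma_J as formal variables (J runs over index tuples, I over tuples of length s).\<close>
definition Tpair :: "nat \<Rightarrow> ('n list \<Rightarrow> 'n list \<Rightarrow> 'm \<Rightarrow> ('n::finite, 'm::finite) pt \<Rightarrow> real)
     \<Rightarrow> 'n list \<Rightarrow> ('n, 'm) xcoef" where
  "Tpair r t I p \<xi> = (\<Sum>J\<in>{J::'n list. length J < r}. \<Sum>\<sigma>\<in>UNIV. t I J \<sigma> p * \<xi> (\<sigma>, mset J))"

definition Rt :: "nat \<Rightarrow> nat \<Rightarrow> ('n list \<Rightarrow> 'n list \<Rightarrow> 'm \<Rightarrow> ('n::{finite,linorder}, 'm::finite) pt \<Rightarrow> real)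
     \<Rightarrow> ('n, 'm) form" where
  "Rt s r t = fsum {I. length I = s} (\<lambda>I. fsum {J. length J < r} (\<lambda>J. fsum UNIV (\<lambda>\<sigma>.
      wedge [((\<lambda>p. - t I J \<sigma> p), [OM \<sigma> (mset J)])] (dsI I))))"

end

theory Submission
  imports Defs
begin

(* Both sides are evaluated monomial by monomial.  Every monomial of ds_I is a constant
   multiple of a wedge of dx's, so d_H maps the monomial  -t omega^sigma_J /\ ds_I  to
   -(d_i t omega^sigma_J + t omega^sigma_(Ji)) /\ ds_I /\ dx^i  (times the sign of d_H).
   Contracting with J^r Xi only sees the contact factor, producing Xi^sigma_J and
   Xi^sigma_(Ji), and moving dx^i to the front of ds_I contributes a second sign which
   cancels the first together with the minus sign of R~.  What remains is the Leibniz
   expansion  d_i (t Xi^sigma_J) = d_i t Xi^sigma_J + t Xi^sigma_(Ji),  i.e. the formal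
   derivative taken by Div. *)

lemma finite_lists_length_less: "finite {xs :: 'a::finite list. length xs < r}"
  using finite_lists_length_le[of "UNIV :: 'a set" r] by (rule finite_subset[rotated]) auto

lemma finite_lists_length: "finite {xs :: 'a::finite list. length xs = s}"
  using finite_lists_length_eq[of "UNIV :: 'a set" s] by simp

lemma finite_multisets_size_le: "finite {M :: 'a::finite multiset. size M \<le> K}"
proof -
  have "finite {xs :: 'a list. length xs \<le> K}"
    using finite_lists_length_le[of "UNIV :: 'a set" K] by simp
  moreover have "{M :: 'a multiset. size M \<le> K} \<subseteq> mset ` {xs. length xs \<le> K}"
    by (auto simp: image_iff) (metis ex_mset size_mset)
  ultimately show ?thesis
    by (metis finite_imageI finite_subset)
qed

lemma sum_swap3:
  "(\<Sum>x\<in>A. \<Sum>y\<in>B. \<Sum>z\<in>C. f x y z) = (\<Sum>z\<in>C. \<Sum>x\<in>A. \<Sum>y\<in>B. (f x y z :: 'a :: comm_monoid_add))"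
  by (simp add: sum.swap[of _ C])

lemma sum_sum_list_commute: "(\<Sum>x\<in>A. \<Sum>y\<leftarrow>ys. f x y) = (\<Sum>y\<leftarrow>ys. \<Sum>x\<in>A. f x y)"
  by (induction ys) (auto simp: sum.distrib)

lemma sum_sum_delta:
  fixes h :: "'a::finite \<Rightarrow> 'b \<Rightarrow> real"
  assumes "finite B" "snd y \<in> B"
  shows "(\<Sum>a\<in>UNIV. \<Sum>b\<in>B. h a b * (if y = (a, b) then c else 0)) = c * h (fst y) (snd y)"
proof -
  have "(\<Sum>a\<in>UNIV. \<Sum>b\<in>B. h a b * (if y = (a, b) then c else 0))
      = (\<Sum>z\<in>UNIV \<times> B. if z = y then c * h (fst z) (snd z) else 0)"
    by (auto simp: sum.cartesian_product intro!: sum.cong)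
  then show ?thesis
    using assms by (simp add: mem_Times_iff)
qed

lemma sum_multisets_size_le_extend:
  assumes "a \<le> K" "\<And>M. a < size M \<Longrightarrow> g M = 0"
  shows "(\<Sum>M\<in>{M. size M \<le> a}. g M) = (\<Sum>M\<in>{M :: 'n::finite multiset. size M \<le> K}. g M)"
  by (rule sum.mono_neutral_left[OF finite_multisets_size_le]) (use assms in auto)

section \<open>Evaluation of forms\<close>

definition basis_eval :: "('n::finite, 'm) pt \<Rightarrow> ('n, 'm) b1 list \<Rightarrow> ('n, 'm) pt list \<Rightarrow> real" where
  "basis_eval p bs vs = mono_eval p (\<lambda>_. 1) bs vs"

lemma mono_eval_eq: "mono_eval p c bs vs = c p * basis_eval p bs vs"
  by (simp add: basis_eval_def mono_eval_def)

lemma form_eval_eq_sum_list: "form_eval p A vs = (\<Sum>m\<leftarrow>A. fst m p * basis_eval p (snd m) vs)"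
  unfolding form_eval_def by (auto simp: mono_eval_eq intro!: arg_cong[of _ _ sum_list])

lemma form_eval_append [simp]: "form_eval p (A @ B) vs = form_eval p A vs + form_eval p B vs"
  by (simp add: form_eval_def)

lemma form_eval_concat: "form_eval p (concat As) vs = (\<Sum>A\<leftarrow>As. form_eval p A vs)"
  by (induction As) (auto simp: form_eval_def)

lemma form_eval_fsum:
  assumes "finite A"
  shows "form_eval p (fsum A g) vs = (\<Sum>x\<in>A. form_eval p (g x) vs)"
proof -
  from assms have "\<exists>xs. distinct xs \<and> set xs = A" by (metis finite_distinct_list)
  then have "distinct (SOME xs. distinct xs \<and> set xs = A) \<and> set (SOME xs. distinct xs \<and> set xs = A) = A"
    by (rule someI_ex)
  then show ?thesis
    by (auto simp: fsum_def form_eval_concat sum_list_distinct_conv_sum_set o_def)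
qed

lemma dH_concat: "dH (concat As) = concat (map dH As)"
  by (induction As) (auto simp: dH_def)

lemma contr_concat: "contr xi (concat As) = concat (map (contr xi) As)"
  by (induction As) (auto simp: contr_def)

lemma dH_fsum: "dH (fsum A g) = fsum A (\<lambda>x. dH (g x))"
  by (simp add: fsum_def dH_concat o_def)

lemma contr_fsum: "contr xi (fsum A g) = fsum A (\<lambda>x. contr xi (g x))"
  by (simp add: fsum_def contr_concat o_def)

lemma dH_eq_concat_monomials: "dH A = concat (map (\<lambda>m. dH [m]) A)"
  by (induction A) (auto simp: dH_def)

lemma contr_Cons: "contr xi (m # A) = contr xi [m] @ contr xi A"
  by (simp add: contr_def)

lemma wedge_singleton: "wedge [(c, [b])] B = map (\<lambda>(d, es). ((\<lambda>p. c p * d p), b # es)) B"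
  by (simp add: wedge_def)

lemma basis_eval_permute_list:
  assumes \<sigma>: "\<sigma> permutes {..<length bs}"
  shows "basis_eval p (permute_list \<sigma> bs) vs = of_int (sign \<sigma>) * basis_eval p bs vs"
proof (cases "length vs = length bs")
  case True
  define n where "n = length bs"
  define S where "S = {\<pi>. \<pi> permutes {..<n}}"
  define f where "f a b = ev1 p (bs ! a) (vs ! b)" for a b
  have "basis_eval p (permute_list \<sigma> bs) vs = (\<Sum>\<pi>\<in>S. of_int (sign \<pi>) * (\<Prod>a<n. f (\<sigma> a) (\<pi> a)))"
    using True \<sigma> by (simp add: basis_eval_def mono_eval_def f_def S_def n_def permute_list_nth)
  also have "\<dots> = (\<Sum>\<pi>\<in>S. of_int (sign (\<pi> \<circ> \<sigma>)) * (\<Prod>a<n. f (\<sigma> a) ((\<pi> \<circ> \<sigma>) a)))"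
    unfolding S_def by (rule sum_permutations_compose_right[OF \<sigma>[folded n_def]])
  also have "\<dots> = (\<Sum>\<pi>\<in>S. of_int (sign \<sigma>) * (of_int (sign \<pi>) * (\<Prod>a<n. f a (\<pi> a))))"
  proof (rule sum.cong[OF refl])
    fix \<pi> assume "\<pi> \<in> S"
    then have "sign (\<pi> \<circ> \<sigma>) = sign \<pi> * sign \<sigma>"
      using \<sigma> by (metis S_def mem_Collect_eq finite_lessThan permutation_permutes sign_compose)
    moreover have "(\<Prod>a<n. f (\<sigma> a) (\<pi> (\<sigma> a))) = (\<Prod>a<n. f a (\<pi> a))"
      using prod.permute[OF \<sigma>[folded n_def], of "\<lambda>a. f a (\<pi> a)"] by simp
    ultimately show "of_int (sign (\<pi> \<circ> \<sigma>)) * (\<Prod>a<n. f (\<sigma> a) ((\<pi> \<circ> \<sigma>) a))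
        = of_int (sign \<sigma>) * (of_int (sign \<pi>) * (\<Prod>a<n. f a (\<pi> a)))"
      by simp
  qed
  also have "\<dots> = of_int (sign \<sigma>) * basis_eval p bs vs"
    using True by (simp add: basis_eval_def mono_eval_def f_def S_def n_def sum_distrib_left)
  finally show ?thesis .
qed (simp add: basis_eval_def mono_eval_def)

lemma basis_eval_swap: "basis_eval p (xs @ y # x # zs) vs = - basis_eval p (xs @ x # y # zs) vs"
proof -
  define \<tau> where "\<tau> = Transposition.transpose (length xs) (Suc (length xs))"
  have \<tau>: "\<tau> permutes {..<length (xs @ x # y # zs)}"
    unfolding \<tau>_def by (rule permutes_swap_id) auto
  have "permute_list \<tau> (xs @ x # y # zs) = xs @ y # x # zs"
  proof (rule nth_equalityI)
    fix a assume "a < length (permute_list \<tau> (xs @ x # y # zs))"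
    then have "a < length (xs @ x # y # zs)" by simp
    then show "permute_list \<tau> (xs @ x # y # zs) ! a = (xs @ y # x # zs) ! a"
      using \<tau> by (cases "a < length xs"; cases "a - length xs")
        (auto simp: permute_list_nth \<tau>_def nth_append Transposition.transpose_def)
  qed simp
  then show ?thesis
    using basis_eval_permute_list[OF \<tau>, of p vs] by (simp add: \<tau>_def sign_swap_id)
qed

lemma basis_eval_snoc: "basis_eval p (xs @ [b]) vs = (-1) ^ length xs * basis_eval p (b # xs) vs"
proof -
  have "basis_eval p (ys @ xs @ [b]) vs = (-1) ^ length xs * basis_eval p (ys @ b # xs) vs" for ys
  proof (induction xs arbitrary: ys)
    case (Cons x xs)
    have "basis_eval p (ys @ (x # xs) @ [b]) vs = (-1) ^ length xs * basis_eval p (ys @ x # b # xs) vs"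
      using Cons.IH[of "ys @ [x]"] by simp
    then show ?case
      using basis_eval_swap[of p ys x b xs vs] by simp
  qed simp
  from this[of "[]"] show ?thesis by simp
qed

section \<open>Partial and formal derivatives\<close>

definition partially_differentiable :: "'c \<Rightarrow> (('c \<Rightarrow> real) \<Rightarrow> real) \<Rightarrow> ('c \<Rightarrow> real) \<Rightarrow> bool" where
  "partially_differentiable c f p \<longleftrightarrow> (\<lambda>h. f (p(c := p c + h))) differentiable (at 0)"

lemma smooth_on_imp_partially_differentiable:
  "smooth_on D f \<Longrightarrow> p \<in> D \<Longrightarrow> partially_differentiable c f p"
  unfolding smooth_on_def partially_differentiable_def by (metis pds.simps(1))

lemma pd_eq_0_if_constant: "(\<And>h. f (p(c := p c + h)) = f p) \<Longrightarrow> pd c f p = 0"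
  by (simp add: pd_def)

lemma has_real_derivative_pd:
  "partially_differentiable c f p \<Longrightarrow> ((\<lambda>h. f (p(c := p c + h))) has_real_derivative pd c f p) (at 0)"
  by (simp add: pd_def partially_differentiable_def DERIV_deriv_iff_real_differentiable)

lemma pd_mult_const:
  "partially_differentiable c f p \<Longrightarrow> pd c (\<lambda>q. f q * a) p = pd c f p * a"
  unfolding pd_def[of c "\<lambda>q. f q * a"]
  by (intro DERIV_imp_deriv DERIV_cmult_right has_real_derivative_pd)

lemma pd_sum_mult_const:
  assumes "finite A" "\<And>x. x \<in> A \<Longrightarrow> partially_differentiable c (f x) p"
  shows "pd c (\<lambda>q. \<Sum>x\<in>A. f x q * a x) p = (\<Sum>x\<in>A. pd c (f x) p * a x)"
  unfolding pd_def[of c "\<lambda>q. \<Sum>x\<in>A. f x q * a x"]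
  using assms by (intro DERIV_imp_deriv DERIV_sum DERIV_cmult_right has_real_derivative_pd)

lemma pd_linear_form:
  assumes "finite A"
  shows "pd c (\<lambda>\<xi>. \<Sum>x\<in>A. a x * \<xi> (g x)) \<xi> = (\<Sum>x\<in>A. if g x = c then a x else 0)"
proof -
  have "((\<lambda>h. (\<xi>(c := \<xi> c + h)) y) has_real_derivative (if y = c then 1 else 0)) (at 0)" for y
    by (cases "y = c") (auto intro!: derivative_eq_intros)
  then have "((\<lambda>h. \<Sum>x\<in>A. a x * (\<xi>(c := \<xi> c + h)) (g x))
      has_real_derivative (\<Sum>x\<in>A. a x * (if g x = c then 1 else 0))) (at 0)"
    using assms by (intro DERIV_sum DERIV_cmult)
  then show ?thesis
    unfolding pd_def by (simp add: DERIV_imp_deriv if_distrib cong: if_cong)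
qed

(* fd and fdX cut their sums off at the least jet order of the coefficient (ford, fordF);
   any larger bound gives the same value. *)
lemma fd_conv_bound:
  fixes f :: "('n::finite, 'm::finite) pt \<Rightarrow> real"
  assumes "depends_upto K f"
  shows "fd i f p = pd (X i) f p
    + (\<Sum>s\<in>UNIV. \<Sum>M\<in>{M. size M \<le> K}. p (Y s (M + {#i#})) * pd (Y s M) f p)"
proof -
  have "ford f \<le> K" "depends_upto (ford f) f"
    unfolding ford_def using assms by (rule Least_le, rule LeastI)
  moreover have "pd (Y s M) f p = 0" if "depends_upto a f" "a < size M" for a s M
    using that by (intro pd_eq_0_if_constant) (simp add: depends_upto_def)
  ultimately show ?thesis
    unfolding fd_def by (simp add: sum_multisets_size_le_extend)
qed

lemma fdX_conv_bound:
  fixes F :: "('n::finite, 'm::finite) xcoef"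
  assumes "dependsF K F"
  shows "fdX l F p \<xi> = pd (X l) (\<lambda>q. F q \<xi>) p
     + (\<Sum>s\<in>UNIV. \<Sum>M\<in>{M. size M \<le> K}. p (Y s (M + {#l#})) * pd (Y s M) (\<lambda>q. F q \<xi>) p)
     + (\<Sum>s\<in>UNIV. \<Sum>M\<in>{M. size M \<le> K}. \<xi> (s, M + {#l#}) * pd (s, M) (F p) \<xi>)"
proof -
  have "fordF F \<le> K" "dependsF (fordF F) F"
    unfolding fordF_def using assms by (rule Least_le, rule LeastI)
  moreover have "pd (Y s M) (\<lambda>q. F q \<xi>) p = 0" "pd (s, M) (F p) \<xi> = 0"
    if "dependsF a F" "a < size M" for a s M
    using that by (auto intro!: pd_eq_0_if_constant simp: dependsF_def)
  ultimately show ?thesis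
    unfolding fdX_def by (simp add: sum_multisets_size_le_extend)
qed

lemma depends_upto_mono: "depends_upto k f \<Longrightarrow> k \<le> K \<Longrightarrow> depends_upto K f"
  unfolding depends_upto_def by (meson order_trans)

lemma fd_mult_const:
  fixes f :: "('n::finite, 'm::finite) pt \<Rightarrow> real"
  assumes "depends_upto K f" "\<And>c. partially_differentiable c f p"
  shows "fd i (\<lambda>q. f q * a) p = fd i f p * a"
proof -
  have dep: "depends_upto K (\<lambda>q. f q * a)"
    using assms(1) by (simp add: depends_upto_def)
  show ?thesis
    unfolding fd_conv_bound[OF dep] fd_conv_bound[OF assms(1)] pd_mult_const[OF assms(2)]
    by (simp add: sum_distrib_left sum_distrib_right algebra_simps)
qed

lemma dependsF_pairing:
  fixes f :: "'a \<Rightarrow> ('n, 'm) pt \<Rightarrow> real"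
  assumes "\<And>x. x \<in> A \<Longrightarrow> depends_upto K (f x)" "\<And>x. x \<in> A \<Longrightarrow> size (snd (g x)) \<le> K"
  shows "dependsF K (\<lambda>q \<xi>. \<Sum>x\<in>A. f x q * \<xi> (g x))"
  unfolding dependsF_def
proof (intro allI impI sum.cong refl)
  fix q q' :: "('n, 'm) pt" and \<xi> \<xi>' :: "'m \<times> 'n multiset \<Rightarrow> real" and x
  assume "\<forall>c. cord c \<le> K \<longrightarrow> q c = q' c" "\<forall>s M. size M \<le> K \<longrightarrow> \<xi> (s, M) = \<xi>' (s, M)" "x \<in> A"
  with assms show "f x q * \<xi> (g x) = f x q' * \<xi>' (g x)"
    unfolding depends_upto_def by (metis prod.collapse)
qed

lemma fdX_pairing:
  fixes f :: "'a \<Rightarrow> ('n::finite, 'm::finite) pt \<Rightarrow> real"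
  assumes A: "finite A"
    and dep: "\<And>x. x \<in> A \<Longrightarrow> depends_upto K (f x)"
    and dif: "\<And>x c. x \<in> A \<Longrightarrow> partially_differentiable c (f x) p"
    and size: "\<And>x. x \<in> A \<Longrightarrow> size (snd (g x)) \<le> K"
  shows "fdX l (\<lambda>q \<xi>. \<Sum>x\<in>A. f x q * \<xi> (g x)) p \<xi>
    = (\<Sum>x\<in>A. fd l (f x) p * \<xi> (g x) + f x p * \<xi> (fst (g x), snd (g x) + {#l#}))"
proof -
  define F :: "('n, 'm) xcoef" where "F = (\<lambda>q \<xi>. \<Sum>x\<in>A. f x q * \<xi> (g x))"
  define Ms where "Ms = {M :: 'n multiset. size M \<le> K}"
  have "finite Ms"
    unfolding Ms_def by (rule finite_multisets_size_le)
  have "dependsF K F"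
    unfolding F_def using dep size by (rule dependsF_pairing)
  have swap: "(\<Sum>s\<in>UNIV. \<Sum>M\<in>Ms. c s M * (\<Sum>x\<in>A. h x s M))
      = (\<Sum>x\<in>A. \<Sum>s\<in>UNIV. \<Sum>M\<in>Ms. c s M * h x s M)" for c :: "_ \<Rightarrow> _ \<Rightarrow> real" and h
    unfolding sum_distrib_left by (rule sum_swap3)
  have "pd c (\<lambda>q. F q \<xi>) p = (\<Sum>x\<in>A. pd c (f x) p * \<xi> (g x))" for c
    unfolding F_def using A dif by (rule pd_sum_mult_const)
  moreover have "pd c (F p) \<xi> = (\<Sum>x\<in>A. if g x = c then f x p else 0)" for c
    unfolding F_def using A by (rule pd_linear_form)
  ultimately have "fdX l F p \<xi> = (\<Sum>x\<in>A. pd (X l) (f x) p * \<xi> (g x))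
      + (\<Sum>x\<in>A. \<Sum>s\<in>UNIV. \<Sum>M\<in>Ms. p (Y s (M + {#l#})) * (pd (Y s M) (f x) p * \<xi> (g x)))
      + (\<Sum>x\<in>A. \<Sum>s\<in>UNIV. \<Sum>M\<in>Ms. \<xi> (s, M + {#l#}) * (if g x = (s, M) then f x p else 0))"
    unfolding fdX_conv_bound[OF \<open>dependsF K F\<close>] Ms_def[symmetric] by (simp add: swap)
  also have "\<dots> = (\<Sum>x\<in>A. fd l (f x) p * \<xi> (g x) + f x p * \<xi> (fst (g x), snd (g x) + {#l#}))"
    unfolding sum.distrib[symmetric]
  proof (rule sum.cong[OF refl])
    fix x assume "x \<in> A"
    have "(\<Sum>s\<in>UNIV. \<Sum>M\<in>Ms. \<xi> (s, M + {#l#}) * (if g x = (s, M) then f x p else 0))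
        = f x p * \<xi> (fst (g x), snd (g x) + {#l#})"
      using \<open>finite Ms\<close> size[OF \<open>x \<in> A\<close>] by (subst sum_sum_delta) (auto simp: Ms_def)
    moreover have "fd l (f x) p * \<xi> (g x) = pd (X l) (f x) p * \<xi> (g x)
        + (\<Sum>s\<in>UNIV. \<Sum>M\<in>Ms. p (Y s (M + {#l#})) * (pd (Y s M) (f x) p * \<xi> (g x)))"
      unfolding fd_conv_bound[OF dep[OF \<open>x \<in> A\<close>]] Ms_def by (simp add: sum_distrib_left algebra_simps)
    ultimately show "pd (X l) (f x) p * \<xi> (g x)
        + (\<Sum>s\<in>UNIV. \<Sum>M\<in>Ms. p (Y s (M + {#l#})) * (pd (Y s M) (f x) p * \<xi> (g x)))
        + (\<Sum>s\<in>UNIV. \<Sum>M\<in>Ms. \<xi> (s, M + {#l#}) * (if g x = (s, M) then f x p else 0))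
        = fd l (f x) p * \<xi> (g x) + f x p * \<xi> (fst (g x), snd (g x) + {#l#})"
      by simp
  qed
  finally show ?thesis
    unfolding F_def .
qed

lemma fdX_Tpair:
  fixes t :: "'n list \<Rightarrow> 'n list \<Rightarrow> 'm \<Rightarrow> ('n::finite, 'm::finite) pt \<Rightarrow> real"
  assumes dep: "\<And>J \<sigma>. depends_upto k (t I J \<sigma>)"
    and dif: "\<And>J \<sigma> c. partially_differentiable c (t I J \<sigma>) p"
  shows "fdX l (Tpair r t I) p \<xi> = (\<Sum>J\<in>{J. length J < r}. \<Sum>\<sigma>\<in>UNIV.
           fd l (t I J \<sigma>) p * \<xi> (\<sigma>, mset J) + t I J \<sigma> p * \<xi> (\<sigma>, mset J + {#l#}))"
proof -
  define A where "A = {J :: 'n list. length J < r} \<times> (UNIV :: 'm set)"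
  have "finite A"
    unfolding A_def by (simp add: finite_lists_length_less)
  have "Tpair r t I = (\<lambda>q \<xi>. \<Sum>x\<in>A. t I (fst x) (snd x) q * \<xi> (snd x, mset (fst x)))"
    unfolding A_def by (intro ext) (simp only: Tpair_def sum.cartesian_product' fst_conv snd_conv)
  then have "fdX l (Tpair r t I) p \<xi> = (\<Sum>x\<in>A. fd l (t I (fst x) (snd x)) p * \<xi> (snd x, mset (fst x))
      + t I (fst x) (snd x) p * \<xi> (snd x, mset (fst x) + {#l#}))"
    using fdX_pairing[where K = "k + r" and A = A and f = "\<lambda>x. t I (fst x) (snd x)"
        and g = "\<lambda>x. (snd x, mset (fst x))" and p = p]
    by (simp add: \<open>finite A\<close> depends_upto_mono[OF dep] dif) (simp add: A_def mem_Times_iff)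
  then show ?thesis
    unfolding A_def by (simp only: sum.cartesian_product' fst_conv snd_conv)
qed

section \<open>Contact monomials over ds_I\<close>

definition const_horizontal :: "('n, 'm) form \<Rightarrow> bool" where
  "const_horizontal A \<longleftrightarrow> (\<forall>(c, bs)\<in>set A. (\<exists>v. c = (\<lambda>_. v)) \<and> set bs \<subseteq> range DX)"

lemma const_horizontal_contr_dxvec:
  fixes A :: "('n::finite, 'm) form"
  assumes "const_horizontal A"
  shows "const_horizontal (contr (dxvec i) A)"
proof -
  have "(\<exists>v. c' = (\<lambda>_. v)) \<and> set bs' \<subseteq> range DX" if "(c', bs') \<in> set (contr (dxvec i) A)" for c' bs'
  proof -
    from that obtain c bs a where cbs: "(c, bs) \<in> set A" "a < length bs"
      and c': "c' = (\<lambda>p. (-1) ^ a * c p * ev1 p (bs ! a) (dxvec i p))"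
      and bs': "bs' = take a bs @ drop (Suc a) bs"
      unfolding contr_def by auto
    from assms cbs obtain v where v: "c = (\<lambda>_. v)" and bs: "set bs \<subseteq> range DX"
      unfolding const_horizontal_def by blast
    moreover obtain j where "bs ! a = DX j"
      using bs nth_mem[OF cbs(2)] by blast
    ultimately have "c' = (\<lambda>_. (-1) ^ a * v * (if j = i then 1 else 0))"
      by (simp add: c' dxvec_def)
    moreover have "set bs' \<subseteq> range DX"
      using bs by (auto simp: bs' dest: in_set_takeD in_set_dropD)
    ultimately show ?thesis by blast
  qed
  then show ?thesis
    unfolding const_horizontal_def by auto
qed

lemma const_horizontal_dsI: "const_horizontal (dsI I :: ('n::{finite,linorder}, 'm) form)"
proof -
  have fold: "const_horizontal (fold (\<lambda>i \<rho>. contr (dxvec i) \<rho>) I A)" if "const_horizontal A"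
    for A :: "('n, 'm) form"
    using that by (induction I arbitrary: A) (auto intro: const_horizontal_contr_dxvec)
  show ?thesis
    unfolding dsI_def by (rule fold) (auto simp: const_horizontal_def ds_def)
qed

lemma tot_d_contact_monomial:
  assumes "set es \<subseteq> range DX"
  shows "tot_d i [(c, OM \<sigma> M # es)] = [(fd i c, OM \<sigma> M # es), (c, OM \<sigma> (M + {#i#}) # es)]"
proof -
  define g where "g = (\<lambda>a. case dshift i ((OM \<sigma> M # es) ! a) of None \<Rightarrow> []
      | Some b \<Rightarrow> [(c, (OM \<sigma> M # es)[a := b])])"
  have "g a = []" if "a \<in> set [Suc 0..<Suc (length es)]" for a
  proof -
    have "es ! (a - 1) \<in> range DX"
      using that assms nth_mem[of "a - 1" es] by auto
    then show ?thesis
      using that by (auto simp: g_def nth_Cons')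
  qed
  then have "concat (map g [0..<Suc (length es)]) = g 0"
    by (simp add: upt_conv_Cons del: upt_Suc)
  then show ?thesis
    by (simp add: tot_d_def g_def del: upt_Suc)
qed

lemma form_eval_contr_horizontal_tail:
  assumes "set bs \<subseteq> range DX" "\<forall>j. xi p (X j) = 0"
  shows "form_eval p (contr xi [(c, b # bs)]) vs = c p * ev1 p b (xi p) * basis_eval p bs vs"
proof -
  define f where "f = (\<lambda>a. (-1) ^ a * c p * ev1 p ((b # bs) ! a) (xi p)
      * basis_eval p (take a (b # bs) @ drop (Suc a) (b # bs)) vs)"
  have "f (Suc a) = 0" if "a < length bs" for a
  proof -
    have "bs ! a \<in> range DX"
      using that assms(1) by auto
    then show ?thesis
      using assms(2) by (auto simp: f_def)
  qed
  then have "(\<Sum>a<Suc (length bs). f a) = f 0"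
    unfolding sum.lessThan_Suc_shift by simp
  moreover have "form_eval p (contr xi [(c, b # bs)]) vs = (\<Sum>a<Suc (length bs). f a)"
    by (simp add: contr_def form_eval_eq_sum_list f_def o_def interv_sum_list_conv_sum_set_nat
        atLeast0LessThan del: upt_Suc)
  ultimately show ?thesis
    by (simp add: f_def)
qed

lemma form_eval_contr_jprol_dH_contact:
  assumes es: "set es \<subseteq> range DX" and "size M < r"
  shows "form_eval p (contr (jprol r Xi) (dH [(c, OM \<sigma> M # es)])) vs
    = - (\<Sum>i\<in>UNIV. (fd i c p * xijet Xi \<sigma> M p + c p * xijet Xi \<sigma> (M + {#i#}) p)
          * basis_eval p (DX i # es) vs)"
proof -
  define n where "n = length es"
  have tail: "form_eval p (contr (jprol r Xi) [(c', b # es @ [DX i])]) vs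
      = c' p * ev1 p b (jprol r Xi p) * basis_eval p (es @ [DX i]) vs" for c' b i
    using es by (intro form_eval_contr_horizontal_tail) (auto simp: jprol_def)
  have "dH [(c, OM \<sigma> M # es)] = fsum UNIV (\<lambda>i.
      [((\<lambda>q. (-1) ^ Suc n * fd i c q), OM \<sigma> M # es @ [DX i]),
       ((\<lambda>q. (-1) ^ Suc n * c q), OM \<sigma> (M + {#i#}) # es @ [DX i])])"
    unfolding dH_def n_def by (simp add: tot_d_contact_monomial[OF es])
  then have "form_eval p (contr (jprol r Xi) (dH [(c, OM \<sigma> M # es)])) vs
      = (\<Sum>i\<in>UNIV. (-1) ^ Suc n * (fd i c p * xijet Xi \<sigma> M p + c p * xijet Xi \<sigma> (M + {#i#}) p)
          * basis_eval p (es @ [DX i]) vs)"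
    using \<open>size M < r\<close>
    by (simp add: contr_fsum form_eval_fsum contr_Cons[of _ _ "[_]"] tail jprol_def algebra_simps)
  also have "\<dots> = (\<Sum>i\<in>UNIV. - ((fd i c p * xijet Xi \<sigma> M p + c p * xijet Xi \<sigma> (M + {#i#}) p)
      * basis_eval p (DX i # es) vs))"
    by (simp add: basis_eval_snoc n_def[symmetric] algebra_simps)
  finally show ?thesis
    by (simp add: sum_negf)
qed

lemma Div_Tpair_monomial_eq_contr_dH_Rt_monomial:
  fixes t :: "'n list \<Rightarrow> 'n list \<Rightarrow> 'm \<Rightarrow> ('n::{finite,linorder}, 'm::finite) pt \<Rightarrow> real"
  assumes dep: "\<And>J \<sigma>. depends_upto k (t I J \<sigma>)"
    and dif: "\<And>J \<sigma> c. partially_differentiable c (t I J \<sigma>) p"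
    and es: "set es \<subseteq> range DX"
  shows "(\<Sum>l\<in>UNIV. fdX l (Tpair r t I) p (\<lambda>(\<sigma>, J). xijet Xi \<sigma> J p) * v * basis_eval p (DX l # es) vs)
    = (\<Sum>J\<in>{J. length J < r}. \<Sum>\<sigma>\<in>UNIV.
         form_eval p (contr (jprol r Xi) (dH [((\<lambda>q. - t I J \<sigma> q * v), OM \<sigma> (mset J) # es)])) vs)"
proof -
  define Js where "Js = {J :: 'n list. length J < r}"
  define \<Xi> where "\<Xi> \<sigma> M = xijet Xi \<sigma> M p" for \<sigma> M
  have summand: "form_eval p (contr (jprol r Xi) (dH [((\<lambda>q. - t I J \<sigma> q * v), OM \<sigma> (mset J) # es)])) vs
      = (\<Sum>l\<in>UNIV. v * (fd l (t I J \<sigma>) p * \<Xi> \<sigma> (mset J) + t I J \<sigma> p * \<Xi> \<sigma> (mset J + {#l#}))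
          * basis_eval p (DX l # es) vs)" if "J \<in> Js" for J \<sigma>
  proof -
    have "(\<lambda>q. - t I J \<sigma> q * v) = (\<lambda>q. t I J \<sigma> q * - v)"
      by simp
    then have fd_scaled: "fd l (\<lambda>q. - t I J \<sigma> q * v) p = fd l (t I J \<sigma>) p * - v" for l
      by (simp only: fd_mult_const[OF dep dif])
    have "size (mset J) < r"
      using that by (simp add: Js_def)
    then show ?thesis
      unfolding form_eval_contr_jprol_dH_contact[OF es \<open>size (mset J) < r\<close>] sum_negf[symmetric] fd_scaled
      by (intro sum.cong refl) (simp add: \<Xi>_def algebra_simps)
  qed
  have "(\<Sum>J\<in>Js. \<Sum>\<sigma>\<in>UNIV.
        form_eval p (contr (jprol r Xi) (dH [((\<lambda>q. - t I J \<sigma> q * v), OM \<sigma> (mset J) # es)])) vs)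
      = (\<Sum>J\<in>Js. \<Sum>\<sigma>\<in>UNIV. \<Sum>l\<in>UNIV. v * (fd l (t I J \<sigma>) p * \<Xi> \<sigma> (mset J)
          + t I J \<sigma> p * \<Xi> \<sigma> (mset J + {#l#})) * basis_eval p (DX l # es) vs)"
    by (intro sum.cong refl) (rule summand)
  also have "\<dots> = (\<Sum>l\<in>UNIV. (\<Sum>J\<in>Js. \<Sum>\<sigma>\<in>UNIV. fd l (t I J \<sigma>) p * \<Xi> \<sigma> (mset J)
          + t I J \<sigma> p * \<Xi> \<sigma> (mset J + {#l#})) * v * basis_eval p (DX l # es) vs)"
    by (subst sum_swap3) (simp add: sum_distrib_left sum_distrib_right mult_ac)
  also have "\<dots> = (\<Sum>l\<in>UNIV. fdX l (Tpair r t I) p (\<lambda>(\<sigma>, J). \<Xi> \<sigma> J) * v * basis_eval p (DX l # es) vs)"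
    by (simp add: fdX_Tpair[of k t I, OF dep dif] Js_def)
  finally show ?thesis
    by (simp add: Js_def \<Xi>_def)
qed

lemma Div_Tpair_wedge_eq_contr_dH_Rt_wedge:
  fixes t :: "'n list \<Rightarrow> 'n list \<Rightarrow> 'm \<Rightarrow> ('n::{finite,linorder}, 'm::finite) pt \<Rightarrow> real"
  assumes dep: "\<And>J \<sigma>. depends_upto k (t I J \<sigma>)"
    and dif: "\<And>J \<sigma> c. partially_differentiable c (t I J \<sigma>) p"
    and B: "const_horizontal B"
  shows "form_eval p (fsum UNIV (\<lambda>l.
      wedge [((\<lambda>q. fdX l (Tpair r t I) q (\<lambda>(\<sigma>, J). xijet Xi \<sigma> J q)), [DX l])] B)) vs
    = form_eval p (contr (jprol r Xi) (dH (fsum {J. length J < r} (\<lambda>J. fsum UNIV (\<lambda>\<sigma>.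
      wedge [((\<lambda>q. - t I J \<sigma> q), [OM \<sigma> (mset J)])] B))))) vs"
proof -
  define Js where "Js = {J :: 'n list. length J < r}"
  have "finite Js"
    unfolding Js_def by (rule finite_lists_length_less)
  have "form_eval p (fsum UNIV (\<lambda>l.
      wedge [((\<lambda>q. fdX l (Tpair r t I) q (\<lambda>(\<sigma>, J). xijet Xi \<sigma> J q)), [DX l])] B)) vs
    = (\<Sum>m\<leftarrow>B. \<Sum>l\<in>UNIV. fdX l (Tpair r t I) p (\<lambda>(\<sigma>, J). xijet Xi \<sigma> J p) * fst m p
        * basis_eval p (DX l # snd m) vs)"
    unfolding form_eval_fsum[OF finite_class.finite_UNIV]
    by (simp add: wedge_singleton form_eval_eq_sum_list o_def case_prod_beta sum_sum_list_commute)
  also have "\<dots> = (\<Sum>m\<leftarrow>B. \<Sum>J\<in>Js. \<Sum>\<sigma>\<in>UNIV. form_eval p (contr (jprol r Xi)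
      (dH [((\<lambda>q. - t I J \<sigma> q * fst m q), OM \<sigma> (mset J) # snd m)])) vs)"
  proof (rule arg_cong[of _ _ sum_list], rule map_cong[OF refl])
    fix m assume "m \<in> set B"
    then obtain v where "fst m = (\<lambda>_. v)" and "set (snd m) \<subseteq> range DX"
      using B unfolding const_horizontal_def by auto
    then show "(\<Sum>l\<in>UNIV. fdX l (Tpair r t I) p (\<lambda>(\<sigma>, J). xijet Xi \<sigma> J p) * fst m p
        * basis_eval p (DX l # snd m) vs)
      = (\<Sum>J\<in>Js. \<Sum>\<sigma>\<in>UNIV. form_eval p (contr (jprol r Xi)
          (dH [((\<lambda>q. - t I J \<sigma> q * fst m q), OM \<sigma> (mset J) # snd m)])) vs)"
      unfolding Js_def by (simp add: Div_Tpair_monomial_eq_contr_dH_Rt_monomial[of k t I, OF dep dif])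
  qed
  also have "\<dots> = form_eval p (contr (jprol r Xi) (dH (fsum Js (\<lambda>J. fsum UNIV (\<lambda>\<sigma>.
      wedge [((\<lambda>q. - t I J \<sigma> q), [OM \<sigma> (mset J)])] B))))) vs"
    using \<open>finite Js\<close>
    by (simp add: dH_fsum contr_fsum form_eval_fsum wedge_singleton sum_sum_list_commute
        dH_eq_concat_monomials[of "map _ B"] contr_concat form_eval_concat o_def case_prod_beta)
  finally show ?thesis
    unfolding Js_def .
qed

theorem proposition3p2:
  fixes W :: "(('n::{finite,linorder} \<Rightarrow> real) \<times> ('m::finite \<Rightarrow> real)) set"
    and s r k :: nat
    and t :: "'n list \<Rightarrow> 'n list \<Rightarrow> 'm \<Rightarrow> ('n, 'm) pt \<Rightarrow> real"
    and Xi :: "'m \<Rightarrow> ('n, 'm) pt \<Rightarrow> real"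
  assumes "open W"
    and "s \<le> CARD('n)"
    and "\<forall>I J \<sigma>. depends_upto k (t I J \<sigma>) \<and> smooth_on (Dom W) (t I J \<sigma>)"
    and "\<forall>I J \<sigma> a b. length I = s \<longrightarrow> a < length I \<longrightarrow> b < length I \<longrightarrow> a \<noteq> b \<longrightarrow>
           t (I[a := I ! b, b := I ! a]) J \<sigma> = - t I J \<sigma>"
    and "\<forall>I J J' \<sigma>. mset J = mset J' \<longrightarrow> t I J \<sigma> = t I J' \<sigma>"
    and "\<forall>\<sigma>. depends_upto 0 (Xi \<sigma>) \<and> smooth_on (Dom W) (Xi \<sigma>)"
  shows "form_eq (Dom W) (Div Xi s (Tpair r t)) (contr (jprol r Xi) (dH (Rt s r t)))"
  unfolding form_eq_def
proof (intro ballI allI)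
  fix p vs assume "p \<in> Dom W"
  have dep: "depends_upto k (t I J \<sigma>)" and smooth: "smooth_on (Dom W) (t I J \<sigma>)" for I J \<sigma>
    using assms(3) by blast+
  have dif: "partially_differentiable c (t I J \<sigma>) p" for I J \<sigma> c
    using smooth \<open>p \<in> Dom W\<close> by (rule smooth_on_imp_partially_differentiable)
  show "form_eval p (Div Xi s (Tpair r t)) vs = form_eval p (contr (jprol r Xi) (dH (Rt s r t))) vs"
    unfolding Div_def Rt_def dH_fsum[of "{I. length I = s}"] contr_fsum[of _ "{I. length I = s}"]
      form_eval_fsum[OF finite_lists_length]
    by (rule sum.cong[OF refl])
      (rule Div_Tpair_wedge_eq_contr_dH_Rt_wedge[OF dep dif const_horizontal_dsI])
qed

end
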